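(* Let $q$ be a prime power and $n\ge0$. Let $s_A(n,q)$, $c_A(n,q)$, $ss_A(n,q)$ be the proportions of separable, cyclic, and semisimple elements of $A(n,q)$, respectively. Then \[ s_A(n,q)\le ss_A(n,q)\le s_A(n,q)+(1-c_A(n,q)). \]
   Context: $A(n,q)$ is the group of matrices $x\in GL(n+1,q)$ with $x_{11}=1$ and $x_{j1}=0$ for $j\ge2$, viewed in $GL(n+1,q)$. A matrix is separable if its characteristic polynomial is square-free, cyclic if its minimal polynomial equals its characteristic polynomial, and semisimple if it is diagonalizable over the algebraic closure of $\mathbb{F}_q$. *)

theory Defs
  imports "Jordan_Normal_Form.Jordan_Normal_Form" "HOL-Algebra.Algebraic_Closure_Type"
    "HOL-Computational_Algebra.Squarefree"
begin

definition poly_mat_eval :: "'a::comm_ring_1 poly \<Rightarrow> 'a mat \<Rightarrow> 'a mat" where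
  "poly_mat_eval p M = mat (dim_row M) (dim_col M)
     (\<lambda>(i,j). \<Sum>k\<le>Polynomial.degree p. Polynomial.coeff p k * (M ^\<^sub>m k) $$ (i,j))"

definition minimal_poly :: "'a::field mat \<Rightarrow> 'a poly" where
  "minimal_poly M = (THE p. monic p \<and> poly_mat_eval p M = 0\<^sub>m (dim_row M) (dim_col M) \<and>
      (\<forall>r. r \<noteq> 0 \<longrightarrow> poly_mat_eval r M = 0\<^sub>m (dim_row M) (dim_col M) \<longrightarrow> Polynomial.degree p \<le> Polynomial.degree r))"

definition separable_mat :: "'a::field mat \<Rightarrow> bool" where
  "separable_mat M \<longleftrightarrow> squarefree (char_poly M)"

definition cyclic_mat :: "'a::field mat \<Rightarrow> bool" where
  "cyclic_mat M \<longleftrightarrow> minimal_poly M = char_poly M"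

definition semisimple_mat :: "'a::field mat \<Rightarrow> bool" where
  "semisimple_mat M \<longleftrightarrow> (\<exists>D. diagonal_mat D \<and> similar_mat (map_mat to_ac M) D)"

(* A(n,q) inside GL(n+1,q), indices 0-based: x_{00} = 1 and x_{j0} = 0 for j \<ge> 1 *)
definition A_group :: "nat \<Rightarrow> 'a::field mat set" where
  "A_group n = {x \<in> carrier_mat (n+1) (n+1). invertible_mat x \<and> x $$ (0,0) = 1 \<and>
      (\<forall>j. 1 \<le> j \<and> j \<le> n \<longrightarrow> x $$ (j,0) = 0)}"

definition proportion :: "'a set \<Rightarrow> ('a \<Rightarrow> bool) \<Rightarrow> real" where
  "proportion S P = real (card {x \<in> S. P x}) / real (card S)"

end

theory Submission
  imports Defs
begin

(* Both inequalities hold element by element, so they hold for the proportions in any set of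
   square matrices, A(n,q) included.

   Separable implies semisimple: finite fields are perfect (Frobenius is onto, so a polynomial
   with zero derivative is a p-th power), hence a squarefree characteristic polynomial is coprime
   to its derivative, has distinct roots in the algebraic closure, and these n distinct
   eigenvalues give a basis of eigenvectors.

   Semisimple and cyclic implies separable: a diagonalizable matrix is annihilated by every
   polynomial vanishing on its eigenvalues. If f = g^2 h is the characteristic polynomial with g
   non-constant, then g h has the same roots as f and smaller degree, so the minimal polynomial
   is not f. *)

hide_const (open) Divisibility.prime Divisibility.irreducible
  Polynomials.degree Polynomials.lead_coeff up_ring.coeff UnivPoly.monom module.smult
no_notation fps_nth (infixl \<open>$\<close> 75)

section \<open>Bezout identities and prime divisors\<close>

lemma euclidean_bezout_common_divisor:
  fixes a b :: "'a::euclidean_ring"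
  shows "\<exists>u v. (u * a + v * b) dvd a \<and> (u * a + v * b) dvd b"
proof (induction "euclidean_size b" arbitrary: a b rule: less_induct)
  case less
  show ?case
  proof (cases "b = 0")
    case True
    then show ?thesis by (intro exI[of _ 1] exI[of _ 0]) simp
  next
    case False
    then have "euclidean_size (a mod b) < euclidean_size b" by (rule mod_size_less)
    then obtain u v where uv: "(u * b + v * (a mod b)) dvd b" "(u * b + v * (a mod b)) dvd a mod b"
      using less by blast
    have eq: "u * b + v * (a mod b) = v * a + (u - v * (a div b)) * b"
      by (simp add: minus_div_mult_eq_mod [symmetric] algebra_simps)
    have "(u * b + v * (a mod b)) dvd a"
      using uv by (metis div_mult_mod_eq dvd_add dvd_mult)
    with uv show ?thesis unfolding eq by blast
  qed
qed

lemma coprime_imp_bezout: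
  fixes a b :: "'a::euclidean_ring"
  assumes "coprime a b"
  shows "\<exists>u v. u * a + v * b = 1"
proof -
  obtain u v where "(u * a + v * b) dvd a" "(u * a + v * b) dvd b"
    using euclidean_bezout_common_divisor by blast
  with assms have "is_unit (u * a + v * b)" by (rule coprime_common_divisor)
  then obtain e where "1 = (u * a + v * b) * e" by (elim dvdE)
  then have "(e * u) * a + (e * v) * b = 1" by (simp add: algebra_simps)
  then show ?thesis by blast
qed

lemma euclidean_irreducible_imp_prime_elem:
  fixes p :: "'a::euclidean_ring"
  assumes irr: "irreducible p"
  shows "prime_elem p"
proof (rule prime_elemI)
  show "p \<noteq> 0" using irr by (simp add: Factorial_Ring.irreducible_def)
  show "\<not> p dvd 1" using irr by (simp add: Factorial_Ring.irreducible_def)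
  fix a b assume ab: "p dvd a * b"
  show "p dvd a \<or> p dvd b"
  proof (rule disjCI)
    assume pb: "\<not> p dvd b"
    have "coprime p b"
    proof (rule coprimeI)
      fix d assume "d dvd p" "d dvd b"
      then obtain e where "p = d * e" by (elim dvdE)
      with irr have "is_unit d \<or> is_unit e" by (simp add: Factorial_Ring.irreducible_def)
      moreover have "\<not> is_unit e"
        using \<open>p = d * e\<close> \<open>d dvd b\<close> pb by (auto simp: mult_unit_dvd_iff)
      ultimately show "is_unit d" by blast
    qed
    then obtain u v where "u * p + v * b = 1" using coprime_imp_bezout by blast
    then have "a = (u * p + v * b) * a" by simp
    also have "\<dots> = u * p * a + v * (a * b)" by (simp add: algebra_simps)
    finally have "a = u * p * a + v * (a * b)" .
    moreover have "p dvd u * p * a + v * (a * b)" using ab by simp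
    ultimately show "p dvd a" by simp
  qed
qed

lemma field_poly_prime_divisor_exists:
  fixes p :: "'a::field poly"
  assumes "p \<noteq> 0" "\<not> is_unit p"
  shows "\<exists>g. prime_elem g \<and> g dvd p"
  using assms
proof (induction "degree p" arbitrary: p rule: less_induct)
  case less
  show ?case
  proof (cases "irreducible p")
    case True
    then have "prime_elem p" by (rule euclidean_irreducible_imp_prime_elem)
    then show ?thesis by (intro exI[of _ p]) simp
  next
    case False
    with less.prems obtain a b where ab: "p = a * b" "\<not> is_unit a" "\<not> is_unit b"
      unfolding Factorial_Ring.irreducible_def by blast
    with less.prems(1) have "a \<noteq> 0" "b \<noteq> 0" by auto
    moreover have "degree b > 0" using ab(3) \<open>b \<noteq> 0\<close> is_unit_iff_degree by blast
    ultimately have "degree a < degree p" by (simp add: ab(1) degree_mult_eq)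
    from less.hyps[OF this \<open>a \<noteq> 0\<close> ab(2)] obtain g where "prime_elem g" "g dvd a" by blast
    then show ?thesis by (intro exI[of _ g]) (simp add: ab(1))
  qed
qed

section \<open>Finite fields are perfect\<close>

lemma prime_CHAR_finite_field: "prime CHAR('a::{finite,field})"
  by (simp add: finite_imp_CHAR_pos prime_CHAR_semidom)

lemma surj_power_CHAR: "surj (\<lambda>x::'a::{finite,field}. x ^ CHAR('a))"
proof -
  have "prime CHAR('a)" by (rule prime_CHAR_finite_field)
  have "inj (\<lambda>x::'a. x ^ CHAR('a))"
  proof (rule injI)
    fix x y :: 'a
    assume "x ^ CHAR('a) = y ^ CHAR('a)"
    moreover have "(x - y) ^ CHAR('a) = x ^ CHAR('a) + (- y) ^ CHAR('a)"
      using freshmans_dream[OF \<open>prime CHAR('a)\<close> refl, of x "- y"] by simp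
    moreover have "(- y) ^ CHAR('a) = - (y ^ CHAR('a))"
      using minus_power_prime_CHAR[OF refl \<open>prime CHAR('a)\<close>] .
    ultimately show "x = y" by simp
  qed
  then show ?thesis by (simp add: finite_UNIV_inj_surj)
qed

lemma pderiv_eq_0_imp_power_CHAR:
  fixes g :: "'a::{finite,field} poly"
  assumes "pderiv g = 0"
  shows "\<exists>u. g = u ^ CHAR('a)"
proof -
  define p where "p = CHAR('a)"
  have "prime p" unfolding p_def by (rule prime_CHAR_finite_field)
  then have "p > 0" by (simp add: prime_gt_0_nat)
  define root where "root = inv_into UNIV (\<lambda>x::'a. x ^ p)"
  have root: "root c ^ p = c" for c
    using surj_f_inv_f[OF surj_power_CHAR] unfolding root_def p_def by metis
  have coeff_0: "coeff g k = 0" if k_ndvd: "\<not> p dvd k" for k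
  proof -
    obtain j where k: "k = Suc j" using k_ndvd by (cases k) auto
    have "of_nat k * coeff g k = 0" using coeff_pderiv[of g j] assms k by simp
    moreover have "of_nat k \<noteq> (0::'a)" using k_ndvd by (simp add: of_nat_eq_0_iff_char_dvd p_def)
    ultimately show ?thesis by simp
  qed
  \<comment> \<open>Only exponents divisible by p occur in g; take p-th roots of their coefficients.\<close>
  define u where "u = (\<Sum>i\<le>degree g. monom (root (coeff g (p * i))) i)"
  have "u ^ p = (\<Sum>i\<le>degree g. monom (root (coeff g (p * i))) i ^ p)"
    unfolding u_def using \<open>prime p\<close> by (intro freshmans_dream_sum) (simp_all add: p_def)
  also have "\<dots> = (\<Sum>i\<le>degree g. monom (coeff g (p * i)) (p * i))"
    by (simp add: monom_power root mult.commute)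
  also have "\<dots> = g"
  proof (rule poly_eqI)
    fix k
    have "coeff (\<Sum>i\<le>degree g. monom (coeff g (p * i)) (p * i)) k
        = (\<Sum>i\<le>degree g. if p * i = k then coeff g k else 0)"
      by (auto simp: coeff_sum coeff_monom intro!: sum.cong)
    also have "\<dots> = coeff g k"
    proof (cases "p dvd k")
      case True
      then obtain j where k: "k = p * j" ..
      have "coeff g k = 0" if "degree g < j"
        using that \<open>p > 0\<close> by (intro coeff_eq_0) (simp add: k less_le_trans)
      then show ?thesis using \<open>p > 0\<close> by (auto simp: k)
    next
      case False
      then have "p * i \<noteq> k" for i by auto
      then show ?thesis using coeff_0[OF False] by simp
    qed
    finally show "coeff (\<Sum>i\<le>degree g. monom (coeff g (p * i)) (p * i)) k = coeff g k" .
  qed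
  finally show ?thesis unfolding p_def by blast
qed

lemma prime_elem_pderiv_nonzero:
  fixes g :: "'a::{finite,field} poly"
  assumes "prime_elem g"
  shows "pderiv g \<noteq> 0"
proof
  assume "pderiv g = 0"
  then obtain u where "g = u ^ CHAR('a)" using pderiv_eq_0_imp_power_CHAR by blast
  with assms have "CHAR('a) = 1" by (simp add: prime_elem_power_iff)
  moreover have "prime CHAR('a)" by (rule prime_CHAR_finite_field)
  ultimately show False by simp
qed

lemma squarefree_imp_coprime_pderiv:
  fixes f :: "'a::{finite,field} poly"
  assumes sf: "squarefree f"
  shows "coprime f (pderiv f)"
proof (rule coprimeI)
  fix d assume d: "d dvd f" "d dvd pderiv f"
  show "is_unit d"
  proof (rule ccontr)
    assume "\<not> is_unit d"
    moreover have "d \<noteq> 0" using d(1) sf by auto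
    ultimately obtain g where g: "prime_elem g" "g dvd d"
      using field_poly_prime_divisor_exists by blast
    with d obtain k where k: "f = g * k" and "g dvd pderiv f" by (meson dvd_trans dvdE)
    then have "g dvd k * pderiv g" by (simp add: pderiv_mult dvd_add_right_iff)
    with g(1) have "g dvd k \<or> g dvd pderiv g" by (simp add: prime_elem_dvd_mult_iff)
    then show False
    proof
      assume "g dvd k"
      then have "g ^ 2 dvd f" by (simp add: k power2_eq_square)
      with sf g(1) show False by (auto dest: squarefreeD prime_elem_not_unit)
    next
      assume "g dvd pderiv g"
      then have "degree g \<le> degree (pderiv g)"
        using prime_elem_pderiv_nonzero[OF g(1)] by (rule dvd_imp_degree_le)
      moreover have "degree g > 0"
        using g(1) by (metis is_unit_iff_degree not_gr0 prime_elem_not_unit prime_elem_not_zeroI)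
      ultimately show False using degree_pderiv_le[of g] by linarith
    qed
  qed
qed

section \<open>Separable matrices are semisimple\<close>

interpretation to_ac_hom: field_hom "to_ac :: 'a::field \<Rightarrow> 'a alg_closure"
  by unfold_locales simp_all

lemma (in field_hom) coprime_map_poly:
  assumes "coprime p q"
  shows "coprime (map_poly hom p) (map_poly hom q)"
proof -
  interpret map_poly_hom: map_poly_idom_hom hom ..
  obtain u v where "u * p + v * q = 1" using coprime_imp_bezout[OF assms] by blast
  then have "map_poly hom (u * p + v * q) = 1" by simp
  then have bezout: "map_poly hom u * map_poly hom p + map_poly hom v * map_poly hom q = 1"
    by (simp add: map_poly_hom.hom_add map_poly_hom.hom_mult)
  show ?thesis
  proof (rule coprimeI)
    fix c assume "c dvd map_poly hom p" "c dvd map_poly hom q"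
    then have "c dvd map_poly hom u * map_poly hom p + map_poly hom v * map_poly hom q" by simp
    then show "is_unit c" by (simp only: bezout)
  qed
qed

lemma alg_closed_coprime_pderiv_distinct_roots:
  fixes p :: "'a::alg_closed_field poly"
  assumes cop: "coprime p (pderiv p)"
  shows "\<exists>xs. distinct xs \<and> length xs = degree p \<and> (\<forall>x\<in>set xs. poly p x = 0)"
proof -
  have "p \<noteq> 0" using cop by auto
  then obtain A where A: "size A = degree p" "p = smult (lead_coeff p) (\<Prod>x\<in>#A. [:-x, 1:])"
    using alg_closed_imp_factorization by blast
  obtain xs where xs: "mset xs = A" using ex_mset by blast
  define c where "c = lead_coeff p"
  have p_eq: "p = smult c (\<Prod>x\<leftarrow>xs. [:-x, 1:])"
    using A(2) by (simp flip: xs mset_map c_def add: prod_mset_prod_list)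
  have "distinct xs"
  proof (rule ccontr)
    assume "\<not> distinct xs"
    from not_distinct_decomp[OF this]
    obtain ys zs ws x where xs_eq: "xs = ys @ x # zs @ x # ws" by auto
    define k where "k = smult c (\<Prod>y\<leftarrow>ys @ zs @ ws. [:-y, 1:])"
    have "p = [:-x, 1:] * ([:-x, 1:] * k)"
      unfolding p_eq k_def xs_eq by (simp add: mult_ac del: mult_pCons_left mult_pCons_right)
    then have "[:-x, 1:] dvd p" "[:-x, 1:] dvd pderiv p"
      by (simp_all add: pderiv_mult del: mult_pCons_left mult_pCons_right)
    with cop have "is_unit [:-x, 1:]" by (rule coprime_common_divisor)
    then show False by (simp add: is_unit_iff_degree)
  qed
  moreover have "length xs = degree p" using A(1) xs by (metis size_mset)
  moreover have "poly p x = 0" if "x \<in> set xs" for x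
    using that by (simp add: p_eq poly_prod_list)
  ultimately show ?thesis by blast
qed

lemma eigenvectors_linear_independent:
  fixes A :: "'a::field mat" and v :: "nat \<Rightarrow> 'a vec" and w :: "nat \<Rightarrow> 'a"
  assumes A: "A \<in> carrier_mat n n"
    and ev: "\<And>j. j < m \<Longrightarrow> eigenvector A (v j) (e j)"
    and inj: "inj_on e {..<m}"
    and comb: "\<And>i. i < n \<Longrightarrow> (\<Sum>j<m. w j * v j $ i) = 0"
  shows "\<forall>j<m. w j = 0"
  using ev inj comb
proof (induction m arbitrary: w)
  case 0
  then show ?case by simp
next
  case (Suc m)
  have v: "v j \<in> carrier_vec n" "A *\<^sub>v v j = e j \<cdot>\<^sub>v v j" "v j \<noteq> 0\<^sub>v n" if "j < Suc m" for j
    using Suc.prems(1)[OF that] A by (auto simp: eigenvector_def)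
  have image_comb: "(\<Sum>j<Suc m. w j * e j * v j $ i) = 0" if i: "i < n" for i
  proof -
    have eig: "w j * e j * v j $ i = (\<Sum>l<n. A $$ (i, l) * (w j * v j $ l))" if "j < Suc m" for j
    proof -
      have "e j * v j $ i = (\<Sum>l<n. A $$ (i, l) * v j $ l)"
        using arg_cong[OF v(2)[OF that], of "\<lambda>u. u $ i"] v(1)[OF that] A i
        by (simp add: scalar_prod_def atLeast0LessThan)
      then have "w j * e j * v j $ i = w j * (\<Sum>l<n. A $$ (i, l) * v j $ l)"
        by (simp add: mult.assoc)
      also have "\<dots> = (\<Sum>l<n. A $$ (i, l) * (w j * v j $ l))"
        by (simp add: sum_distrib_left mult_ac)
      finally show ?thesis .
    qed
    have "(\<Sum>j<Suc m. w j * e j * v j $ i) = (\<Sum>j<Suc m. \<Sum>l<n. A $$ (i, l) * (w j * v j $ l))"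
      using eig by simp
    also have "\<dots> = (\<Sum>l<n. A $$ (i, l) * (\<Sum>j<Suc m. w j * v j $ l))"
      by (subst sum.swap) (simp only: sum_distrib_left)
    also have "\<dots> = 0" using Suc.prems(3) by simp
    finally show ?thesis .
  qed
  \<comment> \<open>Applying A - e m to the relation removes its last term.\<close>
  define w' where "w' j = w j * (e j - e m)" for j
  have "\<forall>j<m. w' j = 0"
  proof (rule Suc.IH)
    show "\<And>j. j < m \<Longrightarrow> eigenvector A (v j) (e j)" using Suc.prems(1) by simp
    show "inj_on e {..<m}" using Suc.prems(2) by (rule inj_on_subset) auto
    fix i assume "i < n"
    have "(\<Sum>j<m. w' j * v j $ i) = (\<Sum>j<Suc m. w' j * v j $ i)" by (simp add: w'_def)
    also have "\<dots> = (\<Sum>j<Suc m. w j * e j * v j $ i) - e m * (\<Sum>j<Suc m. w j * v j $ i)"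
      by (simp add: w'_def sum_distrib_left sum_subtractf algebra_simps)
    also have "\<dots> = 0" using image_comb Suc.prems(3) \<open>i < n\<close> by simp
    finally show "(\<Sum>j<m. w' j * v j $ i) = 0" .
  qed
  moreover have "e j \<noteq> e m" if "j < m" for j
    using Suc.prems(2) that by (auto dest: inj_onD)
  ultimately have w_less: "w j = 0" if "j < m" for j using that by (auto simp: w'_def)
  obtain i where "i < n" "v m $ i \<noteq> 0"
    using v(1,3)[of m] by (metis eq_vecI index_zero_vec(1,2) carrier_vecD lessI)
  moreover have "w m * v m $ i = 0" using Suc.prems(3)[OF \<open>i < n\<close>] w_less by simp
  ultimately have "w m = 0" by simp
  with w_less show ?case using less_Suc_eq by auto
qed

lemma distinct_eigenvalues_imp_diagonalizable:
  fixes A :: "'a::field mat"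
  assumes A: "A \<in> carrier_mat n n" and es: "distinct es" "length es = n"
    and ev: "\<And>e. e \<in> set es \<Longrightarrow> eigenvalue A e"
  shows "\<exists>D. diagonal_mat D \<and> similar_mat A D"
proof -
  have "\<exists>v. eigenvector A v (es ! j)" if "j < n" for j
    using ev[of "es ! j"] that es(2) by (simp add: eigenvalue_def)
  then obtain v where v: "\<And>j. j < n \<Longrightarrow> eigenvector A (v j) (es ! j)" by metis
  then have v_carrier: "v j \<in> carrier_vec n" if "j < n" for j
    using that A by (auto simp: eigenvector_def)
  define P where "P = mat n n (\<lambda>(i, j). v j $ i)"
  define D where "D = mat_diag n (\<lambda>j. es ! j)"
  have P: "P \<in> carrier_mat n n" by (simp add: P_def)
  have "det P \<noteq> 0"
  proof
    assume "det P = 0"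
    then obtain w where w: "w \<in> carrier_vec n" "w \<noteq> 0\<^sub>v n" "P *\<^sub>v w = 0\<^sub>v n"
      using det_0_iff_vec_prod_zero[OF P] by blast
    have "(\<Sum>j<n. w $ j * v j $ i) = 0" if "i < n" for i
      using arg_cong[OF w(3), of "\<lambda>u. u $ i"] that w(1)
      by (simp add: P_def scalar_prod_def atLeast0LessThan mult.commute)
    then have "\<forall>j<n. w $ j = 0"
    proof (intro eigenvectors_linear_independent[OF A])
      show "inj_on (\<lambda>j. es ! j) {..<n}" using es by (simp add: inj_on_nth)
    qed (use v in auto)
    with w(1,2) show False by (metis eq_vecI index_zero_vec(1,2) carrier_vecD)
  qed
  then obtain Q where Q: "Q \<in> carrier_mat n n" "P * Q = 1\<^sub>m n" "Q * P = 1\<^sub>m n"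
    using det_non_zero_imp_unit[OF P] by (auto simp: Units_def ring_mat_def)
  have "A * P = P * D"
  proof (rule eq_matI)
    fix i j assume "i < dim_row (P * D)" "j < dim_col (P * D)"
    then have ij: "i < n" "j < n" by (simp_all add: P_def D_def mat_diag_def)
    have "col P j = v j" using ij v_carrier[OF ij(2)] by (auto simp: P_def)
    then have "(A * P) $$ (i, j) = (A *\<^sub>v v j) $ i" using A P ij by simp
    also have "\<dots> = v j $ i * es ! j"
      using v[OF ij(2)] v_carrier[OF ij(2)] ij(1) by (simp add: eigenvector_def)
    also have "\<dots> = (P * D) $$ (i, j)"
      using ij by (simp add: D_def mat_diag_mult_right[OF P]) (simp add: P_def)
    finally show "(A * P) $$ (i, j) = (P * D) $$ (i, j)" .
  qed (use A P in \<open>simp_all add: D_def mat_diag_def\<close>)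
  then have "A = P * D * Q"
    using A P Q by (metis assoc_mult_mat right_mult_one_mat)
  with A P Q have "similar_mat A D" by (intro similar_matI[of _ _ P Q n]) (auto simp: D_def)
  moreover have "diagonal_mat D" by (simp add: D_def mat_diag_def diagonal_mat_def)
  ultimately show ?thesis by blast
qed

lemma separable_imp_semisimple:
  fixes M :: "'a::{finite,field} mat"
  assumes M: "M \<in> carrier_mat n n" and sep: "separable_mat M"
  shows "semisimple_mat M"
proof -
  let ?M = "map_mat to_ac M"
  have M': "?M \<in> carrier_mat n n" using M by simp
  have "coprime (char_poly M) (pderiv (char_poly M))"
    using sep unfolding separable_mat_def by (rule squarefree_imp_coprime_pderiv)
  then have "coprime (char_poly ?M) (pderiv (char_poly ?M))"
    using to_ac_hom.coprime_map_poly
    by (simp add: to_ac_hom.char_poly_hom[OF M] flip: to_ac_hom.map_poly_pderiv)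
  then obtain es where es: "distinct es" "length es = degree (char_poly ?M)"
    "\<And>e. e \<in> set es \<Longrightarrow> poly (char_poly ?M) e = 0"
    using alg_closed_coprime_pderiv_distinct_roots by blast
  have "degree (char_poly ?M) = n" using degree_monic_char_poly[OF M'] by simp
  with es have "\<exists>D. diagonal_mat D \<and> similar_mat ?M D"
    by (intro distinct_eigenvalues_imp_diagonalizable[OF M'])
      (simp_all add: eigenvalue_root_char_poly[OF M'])
  then show ?thesis unfolding semisimple_mat_def .
qed

section \<open>Semisimple cyclic matrices are separable\<close>

interpretation to_ac_poly: map_poly_idom_hom "to_ac :: 'a::field \<Rightarrow> 'a alg_closure" ..

lemma dim_poly_mat_eval [simp]:
  "dim_row (poly_mat_eval p M) = dim_row M" "dim_col (poly_mat_eval p M) = dim_col M"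
  by (simp_all add: poly_mat_eval_def)

lemma poly_mat_eval_index:
  assumes "i < dim_row M" "j < dim_col M" "degree p \<le> d"
  shows "poly_mat_eval p M $$ (i, j) = (\<Sum>k\<le>d. coeff p k * (M ^\<^sub>m k) $$ (i, j))"
proof -
  have "poly_mat_eval p M $$ (i, j) = (\<Sum>k\<le>degree p. coeff p k * (M ^\<^sub>m k) $$ (i, j))"
    using assms by (simp add: poly_mat_eval_def)
  also have "\<dots> = (\<Sum>k\<le>d. coeff p k * (M ^\<^sub>m k) $$ (i, j))"
    using assms(3) by (intro sum.mono_neutral_left) (auto simp: coeff_eq_0)
  finally show ?thesis .
qed

lemma poly_mat_eval_smult: "poly_mat_eval (smult c p) M = c \<cdot>\<^sub>m poly_mat_eval p M"
proof (rule eq_matI)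
  fix i j assume "i < dim_row (c \<cdot>\<^sub>m poly_mat_eval p M)" "j < dim_col (c \<cdot>\<^sub>m poly_mat_eval p M)"
  then show "poly_mat_eval (smult c p) M $$ (i, j) = (c \<cdot>\<^sub>m poly_mat_eval p M) $$ (i, j)"
    by (simp add: poly_mat_eval_index[where d = "degree p"] degree_smult_le
        sum_distrib_left mult.assoc)
qed simp_all

lemma poly_mat_eval_diff: "poly_mat_eval (p - q) M = poly_mat_eval p M - poly_mat_eval q M"
proof (rule eq_matI)
  fix i j
  assume "i < dim_row (poly_mat_eval p M - poly_mat_eval q M)"
    "j < dim_col (poly_mat_eval p M - poly_mat_eval q M)"
  moreover have "degree (p - q) \<le> max (degree p) (degree q)" by (rule degree_diff_le) simp_all
  ultimately show
    "poly_mat_eval (p - q) M $$ (i, j) = (poly_mat_eval p M - poly_mat_eval q M) $$ (i, j)"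
    by (simp add: poly_mat_eval_index[where d = "max (degree p) (degree q)"]
        algebra_simps sum_subtractf)
qed simp_all

lemma degree_minimal_poly_le:
  fixes M :: "'a::field mat"
  assumes "r \<noteq> 0" "poly_mat_eval r M = 0\<^sub>m (dim_row M) (dim_col M)"
  shows "degree (minimal_poly M) \<le> degree r"
proof -
  \<comment> \<open>\<open>minimal_poly\<close> is a definite description, so we exhibit its unique witness.\<close>
  define ann where "ann p \<longleftrightarrow> poly_mat_eval p M = 0\<^sub>m (dim_row M) (dim_col M)" for p
  define minimal where "minimal p \<longleftrightarrow> monic p \<and> ann p \<and>
    (\<forall>r. r \<noteq> 0 \<longrightarrow> ann r \<longrightarrow> degree p \<le> degree r)" for p
  have ann_diff: "ann (p - q)" if "ann p" "ann q" for p q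
    using that by (simp add: ann_def poly_mat_eval_diff)
  obtain r0 where r0: "r0 \<noteq> 0" "ann r0" "\<And>r. r \<noteq> 0 \<Longrightarrow> ann r \<Longrightarrow> degree r0 \<le> degree r"
    using ex_has_least_nat[of "\<lambda>r. r \<noteq> 0 \<and> ann r" r degree] assms unfolding ann_def by blast
  define p0 where "p0 = smult (inverse (lead_coeff r0)) r0"
  have "lead_coeff r0 \<noteq> 0" using r0(1) by simp
  then have "monic p0" "degree p0 = degree r0" by (simp_all add: p0_def)
  moreover have "ann p0" using r0(2) by (simp add: ann_def p0_def poly_mat_eval_smult)
  ultimately have "minimal p0" using r0(3) by (simp add: minimal_def)
  have p0_unique: "q = p0" if "minimal q" for q
  proof (rule ccontr)
    assume "q \<noteq> p0"
    have q: "monic q" "ann q" "\<And>r. r \<noteq> 0 \<Longrightarrow> ann r \<Longrightarrow> degree q \<le> degree r"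
      using \<open>minimal q\<close> by (auto simp: minimal_def)
    have p0: "monic p0" "ann p0" "\<And>r. r \<noteq> 0 \<Longrightarrow> ann r \<Longrightarrow> degree p0 \<le> degree r"
      using \<open>minimal p0\<close> by (auto simp: minimal_def)
    have "q \<noteq> 0" "p0 \<noteq> 0" using q(1) p0(1) by auto
    then have deg: "degree q = degree p0" using q p0 by (simp add: le_antisym)
    have "degree (q - p0) \<le> degree q" by (simp add: degree_diff_le deg)
    moreover have "coeff (q - p0) (degree q) = 0" using q(1) p0(1) deg by simp
    then have "degree (q - p0) \<noteq> degree q"
      using \<open>q \<noteq> p0\<close> by (metis leading_coeff_0_iff right_minus_eq)
    ultimately have "degree (q - p0) < degree q" by simp
    with q(3)[of "q - p0"] \<open>q \<noteq> p0\<close> ann_diff[OF q(2) p0(2)] show False by simp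
  qed
  have "minimal_poly M = (THE p. minimal p)" by (simp add: minimal_poly_def minimal_def ann_def)
  also have "\<dots> = p0" using \<open>minimal p0\<close> p0_unique by (rule the_equality)
  finally show ?thesis using r0(3) assms \<open>degree p0 = degree r0\<close> by (simp add: ann_def)
qed

lemma mat_diag_pow: "mat_diag n d ^\<^sub>m k = mat_diag n (\<lambda>i. d i ^ k)"
  by (induction k) (simp_all add: carrier_matD[OF mat_diag_dim] power_Suc2 del: power_Suc)

lemma diagonal_mat_eq_mat_diag:
  assumes "diagonal_mat D" "D \<in> carrier_mat n n"
  shows "D = mat_diag n (\<lambda>i. D $$ (i, i))"
  using assms by (intro eq_matI) (auto simp: diagonal_mat_def mat_diag_def)

lemma poly_mat_eval_similar_mat_diag:
  assumes sim: "similar_mat_wit A (mat_diag n d) P Q"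
  shows "poly_mat_eval p A = P * mat_diag n (\<lambda>a. poly p (d a)) * Q"
proof -
  have "n = dim_row A"
    using carrier_matD(1)[OF similar_mat_witD(5)[OF refl sim]] by (simp add: mat_diag_def)
  note carrier = similar_mat_witD(4,6,7)[OF this sim]
  have A: "A \<in> carrier_mat n n" and P: "P \<in> carrier_mat n n" and Q: "Q \<in> carrier_mat n n"
    by (fact carrier)+
  have entry: "(P * mat_diag n f * Q) $$ (i, j) = (\<Sum>a<n. P $$ (i, a) * f a * Q $$ (a, j))"
    if "i < n" "j < n" for f i j
    using that P Q by (simp add: mat_diag_mult_right[OF P] scalar_prod_def atLeast0LessThan)
  show ?thesis
  proof (rule eq_matI)
    fix i j assume "i < dim_row (P * mat_diag n (\<lambda>a. poly p (d a)) * Q)"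
      "j < dim_col (P * mat_diag n (\<lambda>a. poly p (d a)) * Q)"
    then have ij: "i < n" "j < n" using P Q by simp_all
    have "poly_mat_eval p A $$ (i, j)
        = (\<Sum>k\<le>degree p. coeff p k * (\<Sum>a<n. P $$ (i, a) * d a ^ k * Q $$ (a, j)))"
      using A ij by (simp add: poly_mat_eval_def similar_mat_wit_pow_id[OF sim] mat_diag_pow entry)
    also have "\<dots> = (\<Sum>k\<le>degree p. \<Sum>a<n. P $$ (i, a) * (coeff p k * d a ^ k) * Q $$ (a, j))"
      by (simp add: sum_distrib_left mult_ac)
    also have "\<dots> = (\<Sum>a<n. \<Sum>k\<le>degree p. P $$ (i, a) * (coeff p k * d a ^ k) * Q $$ (a, j))"
      by (rule sum.swap)
    also have "\<dots> = (\<Sum>a<n. P $$ (i, a) * poly p (d a) * Q $$ (a, j))"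
      by (simp add: poly_altdef sum_distrib_left sum_distrib_right)
    also have "\<dots> = (P * mat_diag n (\<lambda>a. poly p (d a)) * Q) $$ (i, j)"
      using ij by (simp add: entry)
    finally show
      "poly_mat_eval p A $$ (i, j) = (P * mat_diag n (\<lambda>a. poly p (d a)) * Q) $$ (i, j)" .
  qed (use A P Q in simp_all)
qed

lemma (in field_hom) poly_mat_eval_hom:
  assumes "M \<in> carrier_mat n n"
  shows "poly_mat_eval (map_poly hom p) (map_mat hom M) = map_mat hom (poly_mat_eval p M)"
  using assms
  by (intro eq_matI) (simp_all add: poly_mat_eval_def hom_sum hom_mult flip: mat_hom_pow)

lemma semisimple_mat_annihilated:
  fixes M :: "'a::field mat"
  assumes M: "M \<in> carrier_mat n n" and ss: "semisimple_mat M"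
    and roots: "\<And>x. poly (map_poly to_ac (char_poly M)) x = 0 \<Longrightarrow>
      poly (map_poly to_ac r) x = 0"
  shows "poly_mat_eval r M = 0\<^sub>m n n"
proof -
  let ?M = "map_mat to_ac M"
  obtain D P Q where D: "diagonal_mat D" and sim: "similar_mat_wit ?M D P Q"
    using ss unfolding semisimple_mat_def similar_mat_def by blast
  have "n = dim_row ?M" using M by simp
  from similar_mat_witD(5-7)[OF this sim]
  have carrier: "D \<in> carrier_mat n n" "P \<in> carrier_mat n n" "Q \<in> carrier_mat n n" .
  define d where "d i = D $$ (i, i)" for i
  have D_eq: "D = mat_diag n d"
    unfolding d_def using D carrier(1) by (rule diagonal_mat_eq_mat_diag)
  have "upper_triangular D" using D carrier(1) by (auto simp: upper_triangular_def diagonal_mat_def)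
  then have "char_poly D = (\<Prod>a\<leftarrow>diag_mat D. [:- a, 1:])"
    by (rule char_poly_upper_triangular[OF carrier(1)])
  moreover have "diag_mat D = map d [0..<n]" using carrier(1) by (simp add: diag_mat_def d_def)
  moreover have "similar_mat ?M D" using sim by (auto simp: similar_mat_def)
  then have "char_poly ?M = char_poly D" by (rule char_poly_similar)
  ultimately have char_poly_eq:
    "map_poly to_ac (char_poly M) = (\<Prod>a\<leftarrow>map d [0..<n]. [:- a, 1:])"
    using to_ac_hom.char_poly_hom[OF M] by simp
  have "poly (map_poly to_ac r) (d i) = 0" if "i < n" for i
    using that by (intro roots) (auto simp: char_poly_eq poly_prod_list)
  then have "mat_diag n (\<lambda>i. poly (map_poly to_ac r) (d i)) = 0\<^sub>m n n"
    by (intro eq_matI) (auto simp: mat_diag_def)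
  then have "poly_mat_eval (map_poly to_ac r) ?M = P * 0\<^sub>m n n * Q"
    using poly_mat_eval_similar_mat_diag[OF sim[unfolded D_eq]] by simp
  also have "\<dots> = 0\<^sub>m n n" using carrier by simp
  finally have "map_mat to_ac (poly_mat_eval r M) = 0\<^sub>m n n"
    by (simp add: to_ac_hom.poly_mat_eval_hom[OF M])
  also have "\<dots> = map_mat to_ac (0\<^sub>m n n)" by (rule eq_matI) simp_all
  finally show ?thesis by (rule to_ac_hom.mat_hom_inj)
qed

lemma semisimple_cyclic_imp_separable:
  fixes M :: "'a::field mat"
  assumes M: "M \<in> carrier_mat n n" and ss: "semisimple_mat M" and cyc: "cyclic_mat M"
  shows "separable_mat M"
proof (rule ccontr)
  assume "\<not> separable_mat M"
  then obtain g where "g ^ 2 dvd char_poly M" "\<not> is_unit g"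
    unfolding separable_mat_def squarefree_def by blast
  then obtain h where f: "char_poly M = g ^ 2 * h" by (elim dvdE)
  have "char_poly M \<noteq> 0" using degree_monic_char_poly[OF M] by auto
  then have "g \<noteq> 0" "h \<noteq> 0" using f by auto
  with \<open>\<not> is_unit g\<close> have "degree g > 0" by (simp add: is_unit_iff_degree)
  with \<open>g \<noteq> 0\<close> \<open>h \<noteq> 0\<close> have "degree (g * h) < degree (char_poly M)"
    by (simp add: f degree_mult_eq degree_power_eq)
  moreover have "poly_mat_eval (g * h) M = 0\<^sub>m n n"
    using M ss
    by (rule semisimple_mat_annihilated) (simp add: f to_ac_poly.hom_mult to_ac_poly.hom_power)
  then have "degree (minimal_poly M) \<le> degree (g * h)"
    using M \<open>g \<noteq> 0\<close> \<open>h \<noteq> 0\<close> by (intro degree_minimal_poly_le) auto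
  ultimately show False using cyc by (simp add: cyclic_mat_def)
qed

section \<open>Proportions\<close>

lemma proportion_mono:
  assumes "\<And>x. x \<in> S \<Longrightarrow> P x \<Longrightarrow> Q x"
  shows "proportion S P \<le> proportion S Q"
proof (cases "finite S")
  case True
  then have "card {x \<in> S. P x} \<le> card {x \<in> S. Q x}" using assms by (intro card_mono) auto
  then show ?thesis unfolding proportion_def by (simp add: divide_right_mono)
qed (simp add: proportion_def)

lemma proportion_disj_le: "proportion S (\<lambda>x. P x \<or> Q x) \<le> proportion S P + proportion S Q"
proof (cases "finite S")
  case True
  have "card {x \<in> S. P x \<or> Q x} = card ({x \<in> S. P x} \<union> {x \<in> S. Q x})"
    by (rule arg_cong[where f = card]) auto
  also have "\<dots> \<le> card {x \<in> S. P x} + card {x \<in> S. Q x}" by (rule card_Un_le)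
  finally show ?thesis unfolding proportion_def add_divide_distrib [symmetric]
    by (simp add: divide_right_mono flip: of_nat_add)
qed (simp add: proportion_def)

lemma proportion_not_le: "proportion S (\<lambda>x. \<not> P x) \<le> 1 - proportion S P"
proof (cases "finite S \<and> S \<noteq> {}")
  case True
  have "card {x \<in> S. P x} + card {x \<in> S. \<not> P x} = card S"
    using True by (subst card_Un_disjoint [symmetric]) (auto intro: arg_cong[where f = card])
  moreover have "card S > 0" using True by (simp add: card_gt_0_iff)
  ultimately show ?thesis unfolding proportion_def by (simp add: field_simps flip: of_nat_add)
qed (auto simp: proportion_def)

theorem theorem5p11:
  fixes n :: nat
  defines "sA \<equiv> proportion (A_group n :: ('a::{finite,field}) mat set) separable_mat"
    and "cA \<equiv> proportion (A_group n :: 'a mat set) cyclic_mat"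
    and "ssA \<equiv> proportion (A_group n :: 'a mat set) semisimple_mat"
  shows "sA \<le> ssA \<and> ssA \<le> sA + (1 - cA)"
proof
  have square: "x \<in> carrier_mat (n + 1) (n + 1)" if "x \<in> A_group n" for x :: "'a mat"
    using that by (simp add: A_group_def)
  show "sA \<le> ssA"
    unfolding sA_def ssA_def
    by (rule proportion_mono) (use separable_imp_semisimple square in blast)
  have "ssA \<le> proportion (A_group n) (\<lambda>x :: 'a mat. separable_mat x \<or> \<not> cyclic_mat x)"
    unfolding ssA_def
    by (rule proportion_mono) (use semisimple_cyclic_imp_separable square in blast)
  also have "\<dots> \<le> sA + proportion (A_group n) (\<lambda>x :: 'a mat. \<not> cyclic_mat x)"
    unfolding sA_def by (rule proportion_disj_le)
  also have "\<dots> \<le> sA + (1 - cA)"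
    unfolding cA_def using proportion_not_le by simp
  finally show "ssA \<le> sA + (1 - cA)" .
qed

end
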